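(* Let $m\ge1$ and let $V\subset(\mathbb C^N)^{\otimes m}$ be the subspace of traceless tensors. Let $(\mathbb C^N)^{\otimes(m+1)}$ be acted on by $\mathrm{End}(\mathbb C^N)\otimes U(\mathfrak{gl}_N)$, where $\mathrm{End}(\mathbb C^N)$ acts on the first tensor factor and $U(\mathfrak{gl}_N)$ acts on the last $m$ factors via $E_{ij}\mapsto\sum_{p=1}^m 1^{\otimes(p-1)}\otimes E_{ij}\otimes1^{\otimes(m-p)}$. Then the action of the element $$\frac{\tilde E(\eta-u)\,E(\eta+u)}{u-\eta}\in\mathrm{End}(\mathbb C^N)\otimes U(\mathfrak{gl}_N)(u)$$ on $(\mathbb C^N)^{\otimes(m+1)}$ preserves the subspace $\mathbb C^N\otimes V$, and on this subspace it coincides with the action of $F(u)\in\mathrm{End}(\mathbb C^N)\otimes U(\mathfrak g)[u]$ (with $U(\mathfrak g)\subset U(\mathfrak{gl}_N)$ acting by restriction).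
   Context: $M=\lfloor N/2\rfloor$. Index set $I=\{-M,\dots,-1,1,\dots,M\}$ if $N=2M$, $I=\{-M,\dots,-1,0,1,\dots,M\}$ if $N=2M+1$; $e_i$ ($i\in I$) basis of $\mathbb C^N$, $E_{ij}$ matrix units. $G=O_N$ is the subgroup of $GL_N$ preserving the symmetric form $\langle e_i,e_j\rangle=\delta_{i,-j}$, or $G=Sp_N$ ($N$ even) preserving the alternating form $\langle e_i,e_j\rangle=\delta_{i,-j}\operatorname{sgn}i$; $\mathfrak g\subset\mathfrak{gl}_N$ its Lie algebra. $\varepsilon_{ij}=\operatorname{sgn}i\operatorname{sgn}j$ for $Sp_N$, $1$ for $O_N$; $F_{ij}=E_{ij}-\varepsilon_{ij}E_{-j,-i}$; $\eta=\frac12$ if $\mathfrak g=\mathfrak{so}_N$, $\eta=-\frac12$ if $\mathfrak g=\mathfrak{sp}_N$. $E(u)=-u+\sum_{i,j}E_{ij}\otimes E_{ji}$, $\tilde E(u)=-u+\sum_{i,j}\varepsilon_{ij}E_{ij}\otimes E_{-i,-j}$ (in $\mathrm{End}(\mathbb C^N)\otimes U(\mathfrak{gl}_N)[u]$), $F(u)=-u-\eta+\sum_{i,j}E_{ij}\otimes F_{ji}$. A tensor $t\in(\mathbb C^N)^{\otimes m}$ is traceless if for every pair of distinct positions $p\ne q$, applying the form $\langle\,,\rangle$ to the $p$-th and $q$-th tensor factors of $t$ gives $0\in(\mathbb C^N)^{\otimes(m-2)}$. *)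

theory Defs
  imports Complex_Main
begin

datatype grp = Orth | Symp

text \<open>Index set I (M = N div 2); basis vector e_i of C^N is indexed by i in I.\<close>
definition idx :: "nat \<Rightarrow> int set" where
  "idx N = {i. i \<noteq> 0 \<and> \<bar>i\<bar> \<le> int (N div 2)} \<union> (if odd N then {0} else {})"

definition form :: "grp \<Rightarrow> int \<Rightarrow> int \<Rightarrow> complex" where
  "form G i j = (if i = - j then (if G = Symp then of_int (sgn i) else 1) else 0)"

definition eps :: "grp \<Rightarrow> int \<Rightarrow> int \<Rightarrow> complex" where
  "eps G i j = (if G = Symp then of_int (sgn i * sgn j) else 1)"

definition eta :: "grp \<Rightarrow> complex" where
  "eta G = (if G = Orth then 1/2 else - 1/2)"

text \<open>Tensors in (C^N)^{\<otimes>k}: coefficient functions on index lists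
  (coefficient of e_{x_1} \<otimes> ... \<otimes> e_{x_k}), vanishing outside valid index lists.\<close>
definition tens :: "nat \<Rightarrow> nat \<Rightarrow> (int list \<Rightarrow> complex) set" where
  "tens N k = {t. \<forall>xs. t xs \<noteq> 0 \<longrightarrow> length xs = k \<and> set xs \<subseteq> idx N}"

text \<open>Matrix unit E_ij acting on the p-th tensor factor (positions counted from 0).\<close>
definition act_pos :: "nat \<Rightarrow> int \<Rightarrow> int \<Rightarrow> (int list \<Rightarrow> complex) \<Rightarrow> (int list \<Rightarrow> complex)" where
  "act_pos p i j t = (\<lambda>xs. if p < length xs \<and> xs ! p = i then t (xs[p := j]) else 0)"

definition gl_act :: "nat \<Rightarrow> int \<Rightarrow> int \<Rightarrow> (int list \<Rightarrow> complex) \<Rightarrow> (int list \<Rightarrow> complex)" where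
  "gl_act m i j t = (\<lambda>xs. \<Sum>p\<in>{1..m}. act_pos p i j t xs)"

definition Eop :: "nat \<Rightarrow> nat \<Rightarrow> complex \<Rightarrow> (int list \<Rightarrow> complex) \<Rightarrow> (int list \<Rightarrow> complex)" where
  "Eop N m u t = (\<lambda>xs. - u * t xs +
     (\<Sum>i\<in>idx N. \<Sum>j\<in>idx N. act_pos 0 i j (gl_act m j i t) xs))"

definition Etop :: "grp \<Rightarrow> nat \<Rightarrow> nat \<Rightarrow> complex \<Rightarrow> (int list \<Rightarrow> complex) \<Rightarrow> (int list \<Rightarrow> complex)" where
  "Etop G N m u t = (\<lambda>xs. - u * t xs +
     (\<Sum>i\<in>idx N. \<Sum>j\<in>idx N. eps G i j * act_pos 0 i j (gl_act m (- i) (- j) t) xs))"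

definition g_act :: "grp \<Rightarrow> nat \<Rightarrow> int \<Rightarrow> int \<Rightarrow> (int list \<Rightarrow> complex) \<Rightarrow> (int list \<Rightarrow> complex)" where
  "g_act G m i j t = (\<lambda>xs. gl_act m i j t xs - eps G i j * gl_act m (- j) (- i) t xs)"

definition Fop :: "grp \<Rightarrow> nat \<Rightarrow> nat \<Rightarrow> complex \<Rightarrow> (int list \<Rightarrow> complex) \<Rightarrow> (int list \<Rightarrow> complex)" where
  "Fop G N m u t = (\<lambda>xs. (- u - eta G) * t xs +
     (\<Sum>i\<in>idx N. \<Sum>j\<in>idx N. act_pos 0 i j (g_act G m j i t) xs))"

definition Sop :: "grp \<Rightarrow> nat \<Rightarrow> nat \<Rightarrow> complex \<Rightarrow> (int list \<Rightarrow> complex) \<Rightarrow> (int list \<Rightarrow> complex)" where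
  "Sop G N m u t = (\<lambda>xs. Etop G N m (eta G - u) (Eop N m (eta G + u) t) xs / (u - eta G))"

text \<open>Traceless: contracting any two distinct positions p, q with the form gives 0.
  The remaining entries of xs index the resulting (m-2)-tensor.\<close>
definition traceless :: "grp \<Rightarrow> nat \<Rightarrow> nat \<Rightarrow> (int list \<Rightarrow> complex) \<Rightarrow> bool" where
  "traceless G N m t = (\<forall>p q xs. p < m \<and> q < m \<and> p \<noteq> q \<and> length xs = m \<and> set xs \<subseteq> idx N \<longrightarrow>
      (\<Sum>a\<in>idx N. \<Sum>b\<in>idx N. form G a b * t (xs[p := a, q := b])) = 0)"

definition Vsp :: "grp \<Rightarrow> nat \<Rightarrow> nat \<Rightarrow> (int list \<Rightarrow> complex) set" where
  "Vsp G N m = {t \<in> tens N m. traceless G N m t}"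

definition CNV :: "grp \<Rightarrow> nat \<Rightarrow> nat \<Rightarrow> (int list \<Rightarrow> complex) set" where
  "CNV G N m = {t \<in> tens N (Suc m). \<forall>i\<in>idx N. (\<lambda>ys. t (i # ys)) \<in> Vsp G N m}"

end

theory Submission
  imports Defs
begin

(* On a basis tensor e_x \<otimes> e_zs, the element \<Sum> E_ij \<otimes> E_ji acts as the sum P of the
   transpositions of the first tensor factor with the other m factors, and \<Sum> \<epsilon>_ij E_ij \<otimes> E_{-i,-j}
   as the sum Q of the corresponding contraction operators, so E(u) = -u + P, tilde E(u) = -u + Q and
   F(u) = -u - \<eta> + P - Q. In Q P, each term of Q composed with the transposition at the same
   position is 2\<eta> times that term of Q, while the other products contract two of the last m
   factors and vanish on C^N \<otimes> V. Hence Q P = 2\<eta> Q there, and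
     tilde E(\<eta> - u) E(\<eta> + u) = (u - \<eta> + Q)(-\<eta> - u + P) = (u - \<eta>)(-\<eta> - u + P - Q) = (u - \<eta>) F(u).
   C^N \<otimes> V is invariant because F(u) involves only the action of g, which preserves the form and
   hence tracelessness. *)

lemma finite_idx [simp]: "finite (idx N)"
proof -
  have "idx N \<subseteq> {- int (N div 2)..int (N div 2)}"
    by (auto simp: idx_def)
  then show ?thesis
    by (rule finite_subset) simp
qed

lemma uminus_mem_idx_iff [simp]: "- i \<in> idx N \<longleftrightarrow> i \<in> idx N"
  by (auto simp: idx_def)

lemma zero_notin_idx: "even N \<Longrightarrow> 0 \<notin> idx N"
  by (simp add: idx_def)

lemma sum_idx_reflect: "(\<Sum>j\<in>idx N. f (- j)) = (\<Sum>j\<in>idx N. f j)"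
  by (rule sum.reindex_bij_witness[of _ uminus uminus]) auto

lemma sum_form_left:
  assumes "b \<in> idx N"
  shows "(\<Sum>a\<in>idx N. form G a b * f a) = form G (- b) b * f (- b)"
proof -
  have "(\<Sum>a\<in>idx N. form G a b * f a) = (\<Sum>a\<in>idx N. if a = - b then form G (- b) b * f a else 0)"
    by (rule sum.cong) (auto simp: form_def)
  with assms show ?thesis
    by simp
qed

lemma eps_commute: "eps G j x = eps G x j"
  by (simp add: eps_def mult.commute)

lemma eps_uminus_right: "eps G x (- j) = 2 * eta G * eps G x j"
  by (cases G) (simp_all add: eps_def eta_def sgn_minus)

lemma eps_eq_form: "eps G x j = (if G = Symp then - of_int (sgn x) else 1) * form G (- j) j"
  by (simp add: eps_def form_def sgn_minus)

lemma form_eq_eps_form: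
  assumes "G = Symp \<Longrightarrow> b \<noteq> 0"
  shows "form G a (- a) = eps G a b * form G b (- b)"
    and "form G (- a) a = eps G a b * form G (- b) b"
  using assms by (cases G; auto simp: form_def eps_def sgn_if)+

lemma mem_tens_iff: "t \<in> tens N k \<longleftrightarrow> (\<forall>xs. \<not> (length xs = k \<and> set xs \<subseteq> idx N) \<longrightarrow> t xs = 0)"
  by (auto simp: tens_def)

lemma tens_eqI:
  assumes "s \<in> tens N k" "t \<in> tens N k"
    and "\<And>xs. length xs = k \<Longrightarrow> set xs \<subseteq> idx N \<Longrightarrow> s xs = t xs"
  shows "s = t"
proof
  fix xs
  show "s xs = t xs"
    using assms by (cases "length xs = k \<and> set xs \<subseteq> idx N") (auto simp: mem_tens_iff)
qed

lemma tens_add: "s \<in> tens N k \<Longrightarrow> t \<in> tens N k \<Longrightarrow> (\<lambda>xs. s xs + t xs) \<in> tens N k"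
  by (simp add: mem_tens_iff)

lemma tens_diff: "s \<in> tens N k \<Longrightarrow> t \<in> tens N k \<Longrightarrow> (\<lambda>xs. s xs - t xs) \<in> tens N k"
  by (simp add: mem_tens_iff)

lemma tens_scale: "t \<in> tens N k \<Longrightarrow> (\<lambda>xs. c * t xs) \<in> tens N k"
  by (simp add: mem_tens_iff)

lemma tens_divide: "t \<in> tens N k \<Longrightarrow> (\<lambda>xs. t xs / c) \<in> tens N k"
  by (simp add: mem_tens_iff)

lemma tens_sum: "(\<And>i. i \<in> A \<Longrightarrow> f i \<in> tens N k) \<Longrightarrow> (\<lambda>xs. \<Sum>i\<in>A. f i xs) \<in> tens N k"
  by (simp add: mem_tens_iff)

lemma tens_act_pos:
  assumes t: "t \<in> tens N k" and i: "i \<in> idx N"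
  shows "act_pos p i j t \<in> tens N k"
  unfolding tens_def mem_Collect_eq
proof (intro allI impI)
  fix xs
  assume "act_pos p i j t xs \<noteq> 0"
  then have p: "p < length xs" "xs ! p = i" and "t (xs[p := j]) \<noteq> 0"
    by (auto simp: act_pos_def split: if_splits)
  with t have "length (xs[p := j]) = k" "set (xs[p := j]) \<subseteq> idx N"
    by (auto simp: tens_def)
  moreover have "xs = xs[p := j, p := i]"
    using p by (metis list_update_id list_update_overwrite)
  ultimately show "length xs = k \<and> set xs \<subseteq> idx N"
    using i by (metis length_list_update set_update_subsetI)
qed

lemma gl_act_tens: "t \<in> tens N k \<Longrightarrow> a \<in> idx N \<Longrightarrow> gl_act m a b t \<in> tens N k"
  unfolding gl_act_def by (intro tens_sum tens_act_pos)

lemma Eop_tens: "t \<in> tens N (Suc m) \<Longrightarrow> Eop N m v t \<in> tens N (Suc m)"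
  unfolding Eop_def by (intro tens_add tens_scale tens_sum tens_act_pos gl_act_tens)

lemma Etop_tens: "t \<in> tens N (Suc m) \<Longrightarrow> Etop G N m v t \<in> tens N (Suc m)"
  unfolding Etop_def by (intro tens_add tens_scale tens_sum tens_act_pos gl_act_tens) simp_all

lemma Fop_tens: "t \<in> tens N (Suc m) \<Longrightarrow> Fop G N m v t \<in> tens N (Suc m)"
  unfolding Fop_def g_act_def
  by (intro tens_add tens_diff tens_scale tens_sum tens_act_pos gl_act_tens) simp_all

lemma Sop_tens: "t \<in> tens N (Suc m) \<Longrightarrow> Sop G N m v t \<in> tens N (Suc m)"
  unfolding Sop_def by (intro tens_divide Etop_tens Eop_tens)

abbreviation slice :: "(int list \<Rightarrow> complex) \<Rightarrow> int \<Rightarrow> int list \<Rightarrow> complex" where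
  "slice t i \<equiv> \<lambda>ys. t (i # ys)"

lemma slice_tens:
  assumes "t \<in> tens N (Suc k)"
  shows "slice t i \<in> tens N k"
  unfolding tens_def mem_Collect_eq
proof (intro allI impI)
  fix ys
  assume "t (i # ys) \<noteq> 0"
  with assms have "length (i # ys) = Suc k \<and> set (i # ys) \<subseteq> idx N"
    unfolding tens_def by blast
  then show "length ys = k \<and> set ys \<subseteq> idx N"
    by simp
qed

lemma mem_CNV_iff:
  "t \<in> CNV G N m \<longleftrightarrow> t \<in> tens N (Suc m) \<and> (\<forall>i\<in>idx N. traceless G N m (slice t i))"
  by (auto simp: CNV_def Vsp_def slice_tens)

definition gl_tensor_act :: "nat \<Rightarrow> int \<Rightarrow> int \<Rightarrow> (int list \<Rightarrow> complex) \<Rightarrow> int list \<Rightarrow> complex" where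
  "gl_tensor_act m a b s = (\<lambda>zs. \<Sum>p<m. act_pos p a b s zs)"

definition g_tensor_act :: "grp \<Rightarrow> nat \<Rightarrow> int \<Rightarrow> int \<Rightarrow> (int list \<Rightarrow> complex) \<Rightarrow> int list \<Rightarrow> complex" where
  "g_tensor_act G m a b s =
     (\<lambda>zs. gl_tensor_act m a b s zs - eps G a b * gl_tensor_act m (- b) (- a) s zs)"

lemma act_pos_0_Cons: "act_pos 0 i j f (x # zs) = (if x = i then f (j # zs) else 0)"
  by (simp add: act_pos_def)

lemma act_pos_Suc_Cons: "act_pos (Suc p) a b t (x # zs) = act_pos p a b (slice t x) zs"
  by (simp add: act_pos_def)

lemma gl_act_Cons: "gl_act m a b t (x # zs) = gl_tensor_act m a b (slice t x) zs"
  by (simp add: gl_act_def gl_tensor_act_def sum.atLeast1_atMost_eq act_pos_Suc_Cons)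

lemma g_act_Cons: "g_act G m a b t (x # zs) = g_tensor_act G m a b (slice t x) zs"
  by (simp add: g_act_def g_tensor_act_def gl_act_Cons)

lemma sum_act_pos_0_Cons:
  assumes "x \<in> idx N"
  shows "(\<Sum>i\<in>idx N. \<Sum>j\<in>idx N. c i j * act_pos 0 i j (f i j) (x # zs))
    = (\<Sum>j\<in>idx N. c x j * f x j (j # zs))"
  using assms by (simp add: act_pos_0_Cons if_distrib sum.If_cases)

(* The values of P t and Q t at x # zs. *)
definition perm_sum :: "nat \<Rightarrow> (int list \<Rightarrow> complex) \<Rightarrow> int \<Rightarrow> int list \<Rightarrow> complex" where
  "perm_sum m t x zs = (\<Sum>p<m. t (zs ! p # zs[p := x]))"

definition contr_sum :: "grp \<Rightarrow> nat \<Rightarrow> nat \<Rightarrow> (int list \<Rightarrow> complex) \<Rightarrow> int \<Rightarrow> int list \<Rightarrow> complex" where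
  "contr_sum G N m t x zs =
     (\<Sum>p<m. if zs ! p = - x then (\<Sum>j\<in>idx N. eps G x j * t (j # zs[p := - j])) else 0)"

lemma sum_gl_tensor_act_slices:
  assumes "length zs = m" "set zs \<subseteq> idx N"
  shows "(\<Sum>j\<in>idx N. gl_tensor_act m j x (slice t j) zs) = perm_sum m t x zs"
proof -
  have "(\<Sum>j\<in>idx N. gl_tensor_act m j x (slice t j) zs)
      = (\<Sum>p<m. \<Sum>j\<in>idx N. if zs ! p = j then t (j # zs[p := x]) else 0)"
    unfolding gl_tensor_act_def act_pos_def using assms(1)
    by (subst sum.swap) (auto intro!: sum.cong)
  also have "\<dots> = perm_sum m t x zs"
    unfolding perm_sum_def using assms by (intro sum.cong refl) (auto simp: set_conv_nth)
  finally show ?thesis .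
qed

lemma sum_eps_gl_tensor_act_slices:
  assumes "length zs = m"
  shows "(\<Sum>j\<in>idx N. eps G x j * gl_tensor_act m (- x) (- j) (slice t j) zs) = contr_sum G N m t x zs"
proof -
  have "(\<Sum>j\<in>idx N. eps G x j * gl_tensor_act m (- x) (- j) (slice t j) zs)
      = (\<Sum>j\<in>idx N. \<Sum>p<m. if zs ! p = - x then eps G x j * t (j # zs[p := - j]) else 0)"
    unfolding gl_tensor_act_def act_pos_def using assms
    by (simp add: sum_distrib_left if_distrib cong: if_cong)
  also have "\<dots> = (\<Sum>p<m. \<Sum>j\<in>idx N. if zs ! p = - x then eps G x j * t (j # zs[p := - j]) else 0)"
    by (rule sum.swap)
  also have "\<dots> = contr_sum G N m t x zs"
    unfolding contr_sum_def by (intro sum.cong refl) auto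
  finally show ?thesis .
qed

lemma Eop_Cons:
  assumes "x \<in> idx N" "length zs = m" "set zs \<subseteq> idx N"
  shows "Eop N m v t (x # zs) = - v * t (x # zs) + perm_sum m t x zs"
  using sum_act_pos_0_Cons[OF assms(1), of "\<lambda>_ _. 1"] assms
  by (simp add: Eop_def gl_act_Cons sum_gl_tensor_act_slices)

lemma Etop_Cons:
  assumes "x \<in> idx N" "length zs = m"
  shows "Etop G N m v t (x # zs) = - v * t (x # zs) + contr_sum G N m t x zs"
  using assms by (simp add: Etop_def sum_act_pos_0_Cons gl_act_Cons sum_eps_gl_tensor_act_slices)

lemma Fop_Cons:
  assumes "x \<in> idx N"
  shows "Fop G N m v t (x # zs)
    = (- v - eta G) * t (x # zs) + (\<Sum>j\<in>idx N. g_tensor_act G m j x (slice t j) zs)"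
  using sum_act_pos_0_Cons[OF assms, of "\<lambda>_ _. 1"] by (simp add: Fop_def g_act_Cons)

lemma Fop_Cons_perm_contr:
  assumes "x \<in> idx N" "length zs = m" "set zs \<subseteq> idx N"
  shows "Fop G N m v t (x # zs)
    = (- v - eta G) * t (x # zs) + perm_sum m t x zs - contr_sum G N m t x zs"
proof -
  have "(\<Sum>j\<in>idx N. g_tensor_act G m j x (slice t j) zs)
      = (\<Sum>j\<in>idx N. gl_tensor_act m j x (slice t j) zs)
        - (\<Sum>j\<in>idx N. eps G x j * gl_tensor_act m (- x) (- j) (slice t j) zs)"
    unfolding g_tensor_act_def sum_subtractf by (subst eps_commute) (rule refl)
  with assms show ?thesis
    by (simp add: Fop_Cons sum_gl_tensor_act_slices sum_eps_gl_tensor_act_slices)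
qed

definition contraction ::
    "grp \<Rightarrow> nat \<Rightarrow> nat \<Rightarrow> nat \<Rightarrow> (int list \<Rightarrow> complex) \<Rightarrow> int list \<Rightarrow> complex" where
  "contraction G N p q s zs = (\<Sum>a\<in>idx N. \<Sum>b\<in>idx N. form G a b * s (zs[p := a, q := b]))"

lemma tracelessI:
  assumes "\<And>p q zs. p < m \<Longrightarrow> q < m \<Longrightarrow> p \<noteq> q \<Longrightarrow> length zs = m \<Longrightarrow> set zs \<subseteq> idx N
      \<Longrightarrow> contraction G N p q s zs = 0"
  shows "traceless G N m s"
  using assms by (auto simp: traceless_def contraction_def)

lemma tracelessD:
  "traceless G N m s \<Longrightarrow> p < m \<Longrightarrow> q < m \<Longrightarrow> p \<noteq> q \<Longrightarrow> length zs = m \<Longrightarrow> set zs \<subseteq> idx N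
    \<Longrightarrow> contraction G N p q s zs = 0"
  by (simp add: traceless_def contraction_def)

lemma contraction_diag:
  "contraction G N p q s zs = (\<Sum>b\<in>idx N. form G (- b) b * s (zs[p := - b, q := b]))"
  unfolding contraction_def by (subst sum.swap) (simp add: sum_form_left)

lemma contraction_add:
  "contraction G N p q (\<lambda>zs. s zs + s' zs) zs = contraction G N p q s zs + contraction G N p q s' zs"
  by (simp add: contraction_def distrib_left sum.distrib)

lemma contraction_diff:
  "contraction G N p q (\<lambda>zs. s zs - s' zs) zs = contraction G N p q s zs - contraction G N p q s' zs"
  by (simp add: contraction_def right_diff_distrib sum_subtractf)

lemma contraction_scale:
  "contraction G N p q (\<lambda>zs. c * s zs) zs = c * contraction G N p q s zs"
  by (simp add: contraction_def sum_distrib_left mult.left_commute)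

lemma contraction_sum:
  "contraction G N p q (\<lambda>zs. \<Sum>j\<in>A. f j zs) zs = (\<Sum>j\<in>A. contraction G N p q (f j) zs)"
  unfolding contraction_def sum_distrib_left
  by (subst sum.swap, subst (2) sum.swap) (rule refl)

lemma traceless_add:
  "traceless G N m s \<Longrightarrow> traceless G N m s' \<Longrightarrow> traceless G N m (\<lambda>zs. s zs + s' zs)"
  by (simp add: tracelessI tracelessD contraction_add)

lemma traceless_scale: "traceless G N m s \<Longrightarrow> traceless G N m (\<lambda>zs. c * s zs)"
  by (simp add: tracelessI tracelessD contraction_scale)

lemma traceless_sum:
  "(\<And>j. j \<in> A \<Longrightarrow> traceless G N m (f j)) \<Longrightarrow> traceless G N m (\<lambda>zs. \<Sum>j\<in>A. f j zs)"
  by (rule tracelessI) (auto simp: contraction_sum intro!: sum.neutral tracelessD)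

lemma contraction_act_pos_first:
  assumes "p < length zs" "p \<noteq> q" "a \<in> idx N"
  shows "contraction G N p q (act_pos p a b s) zs = form G a (- a) * s (zs[p := b, q := - a])"
proof -
  have act: "act_pos p a b s (zs[p := - d, q := d]) = (if d = - a then s (zs[p := b, q := d]) else 0)"
    for d
    using assms by (auto simp: act_pos_def list_update_swap)
  from assms show ?thesis
    by (simp add: contraction_diag act if_distrib cong: if_cong)
qed

lemma contraction_act_pos_second:
  assumes "q < length zs" "p \<noteq> q" "a \<in> idx N"
  shows "contraction G N p q (act_pos q a b s) zs = form G (- a) a * s (zs[p := - a, q := b])"
proof -
  have act: "act_pos q a b s (zs[p := - d, q := d]) = (if d = a then s (zs[p := - a, q := b]) else 0)"
    for d
    using assms by (auto simp: act_pos_def)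
  from assms show ?thesis
    by (simp add: contraction_diag act if_distrib cong: if_cong)
qed

lemma contraction_act_pos_other:
  assumes "r < length zs" "r \<noteq> p" "r \<noteq> q"
  shows "contraction G N p q (act_pos r a b s) zs
    = (if zs ! r = a then contraction G N p q s (zs[r := b]) else 0)"
proof -
  have "act_pos r a b s (zs[p := c, q := d]) = (if zs ! r = a then s (zs[r := b, p := c, q := d]) else 0)"
    for c d
    using assms by (simp add: act_pos_def list_update_swap)
  then show ?thesis
    by (simp add: contraction_def if_distrib cong: if_cong)
qed

lemma contraction_gl_tensor_act:
  assumes s: "traceless G N m s"
    and pq: "p < m" "q < m" "p \<noteq> q" and zs: "length zs = m" "set zs \<subseteq> idx N"
    and ab: "a \<in> idx N" "b \<in> idx N"
  shows "contraction G N p q (gl_tensor_act m a b s) zs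
    = form G a (- a) * s (zs[p := b, q := - a]) + form G (- a) a * s (zs[p := - a, q := b])"
proof -
  have "contraction G N p q (act_pos r a b s) zs
      = (if r = p then form G a (- a) * s (zs[p := b, q := - a]) else 0)
        + (if r = q then form G (- a) a * s (zs[p := - a, q := b]) else 0)" if "r < m" for r
  proof -
    consider "r = p" | "r = q" | "r \<noteq> p" "r \<noteq> q"
      by blast
    then show ?thesis
    proof cases
      case 3
      have "contraction G N p q s (zs[r := b]) = 0"
        using s pq zs ab by (intro tracelessD) (simp_all add: set_update_subsetI)
      with 3 that zs show ?thesis
        by (simp add: contraction_act_pos_other)
    qed (use pq zs ab in \<open>simp_all add: contraction_act_pos_first contraction_act_pos_second\<close>)
  qed
  then show ?thesis
    using pq by (simp add: gl_tensor_act_def contraction_sum sum.distrib)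
qed

lemma traceless_g_tensor_act:
  assumes "traceless G N m s" "a \<in> idx N" "b \<in> idx N" "G = Symp \<Longrightarrow> b \<noteq> 0"
  shows "traceless G N m (g_tensor_act G m a b s)"
proof (rule tracelessI)
  fix p q zs
  assume "p < m" "q < m" "p \<noteq> q" "length zs = m" "set zs \<subseteq> idx N"
  moreover have "form G a (- a) = eps G a b * form G b (- b)" "form G (- a) a = eps G a b * form G (- b) b"
    using form_eq_eps_form assms(4) by blast+
  ultimately show "contraction G N p q (g_tensor_act G m a b s) zs = 0"
    using assms
    by (simp add: g_tensor_act_def contraction_diff contraction_scale contraction_gl_tensor_act
        algebra_simps)
qed

lemma Fop_mem_CNV:
  assumes t: "t \<in> CNV G N m" and N: "G = Symp \<Longrightarrow> even N"
  shows "Fop G N m v t \<in> CNV G N m"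
  unfolding mem_CNV_iff
proof (intro conjI ballI)
  have traceless: "\<forall>i\<in>idx N. traceless G N m (slice t i)" and tens: "t \<in> tens N (Suc m)"
    using t by (simp_all add: mem_CNV_iff)
  then show "Fop G N m v t \<in> tens N (Suc m)"
    by (simp add: Fop_tens)
  fix i
  assume i: "i \<in> idx N"
  then have "slice (Fop G N m v t) i
      = (\<lambda>zs. (- v - eta G) * slice t i zs + (\<Sum>j\<in>idx N. g_tensor_act G m j i (slice t j) zs))"
    by (simp add: Fop_Cons)
  moreover have "traceless G N m
      (\<lambda>zs. (- v - eta G) * slice t i zs + (\<Sum>j\<in>idx N. g_tensor_act G m j i (slice t j) zs))"
    using traceless i N zero_notin_idx
    by (intro traceless_add traceless_scale traceless_sum traceless_g_tensor_act) auto
  ultimately show "traceless G N m (slice (Fop G N m v t) i)"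
    by simp
qed

lemma sum_eps_perm_sum:
  assumes traceless: "\<forall>i\<in>idx N. traceless G N m (slice t i)"
    and zs: "length zs = m" "set zs \<subseteq> idx N" and p: "p < m"
  shows "(\<Sum>j\<in>idx N. eps G x j * perm_sum m t j (zs[p := - j]))
    = 2 * eta G * (\<Sum>j\<in>idx N. eps G x j * t (j # zs[p := - j]))"
proof -
  define Q where "Q = {..<m} - {p}"
  have perm_sum_split: "perm_sum m t j (zs[p := - j])
      = t (- j # zs[p := j]) + (\<Sum>q\<in>Q. t (zs ! q # zs[p := - j, q := j]))" for j
  proof -
    have "perm_sum m t j (zs[p := - j]) = t (- j # zs[p := j])
        + (\<Sum>q\<in>Q. t (zs[p := - j] ! q # zs[p := - j, q := j]))"
      unfolding perm_sum_def Q_def using p zs by (simp add: sum.remove)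
    also have "(\<Sum>q\<in>Q. t (zs[p := - j] ! q # zs[p := - j, q := j]))
        = (\<Sum>q\<in>Q. t (zs ! q # zs[p := - j, q := j]))"
      unfolding Q_def by (intro sum.cong) auto
    finally show ?thesis .
  qed
  have same_position: "(\<Sum>j\<in>idx N. eps G x j * t (- j # zs[p := j]))
      = 2 * eta G * (\<Sum>j\<in>idx N. eps G x j * t (j # zs[p := - j]))"
    by (subst sum_idx_reflect[symmetric]) (simp add: eps_uminus_right sum_distrib_left mult.assoc)
  have other_positions: "(\<Sum>j\<in>idx N. eps G x j * t (zs ! q # zs[p := - j, q := j])) = 0"
    if q: "q \<in> Q" for q
  proof -
    have "contraction G N p q (slice t (zs ! q)) zs = 0"
      using traceless q p zs by (intro tracelessD) (auto simp: Q_def set_conv_nth)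
    then show ?thesis
      by (simp add: contraction_diag eps_eq_form[of G x] sum_distrib_left[symmetric] mult.assoc)
  qed
  have "(\<Sum>j\<in>idx N. eps G x j * perm_sum m t j (zs[p := - j]))
      = (\<Sum>j\<in>idx N. eps G x j * t (- j # zs[p := j]))
        + (\<Sum>q\<in>Q. \<Sum>j\<in>idx N. eps G x j * t (zs ! q # zs[p := - j, q := j]))"
    by (simp add: perm_sum_split distrib_left sum.distrib sum_distrib_left sum.swap[of _ Q])
  then show ?thesis
    by (simp add: same_position other_positions)
qed

lemma contr_sum_Eop:
  assumes "\<forall>i\<in>idx N. traceless G N m (slice t i)" "length zs = m" "set zs \<subseteq> idx N"
  shows "contr_sum G N m (Eop N m v t) x zs = (2 * eta G - v) * contr_sum G N m t x zs"
proof -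
  have position: "(\<Sum>j\<in>idx N. eps G x j * Eop N m v t (j # zs[p := - j]))
      = (2 * eta G - v) * (\<Sum>j\<in>idx N. eps G x j * t (j # zs[p := - j]))" if p: "p < m" for p
  proof -
    have "(\<Sum>j\<in>idx N. eps G x j * Eop N m v t (j # zs[p := - j]))
        = - v * (\<Sum>j\<in>idx N. eps G x j * t (j # zs[p := - j]))
          + (\<Sum>j\<in>idx N. eps G x j * perm_sum m t j (zs[p := - j]))"
      unfolding sum_distrib_left sum.distrib[symmetric] using assms
      by (intro sum.cong refl) (simp add: Eop_Cons set_update_subsetI algebra_simps)
    then show ?thesis
      using sum_eps_perm_sum[OF assms p] by (simp add: algebra_simps)
  qed
  show ?thesis
    unfolding contr_sum_def by (subst sum_distrib_left) (rule sum.cong; simp add: position)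
qed

lemma Sop_Cons:
  assumes "\<forall>i\<in>idx N. traceless G N m (slice t i)" "u \<noteq> eta G"
    and "x \<in> idx N" "length zs = m" "set zs \<subseteq> idx N"
  shows "Sop G N m u t (x # zs) = Fop G N m u t (x # zs)"
proof -
  have "Etop G N m (eta G - u) (Eop N m (eta G + u) t) (x # zs)
      = (u - eta G) * ((- u - eta G) * t (x # zs) + perm_sum m t x zs - contr_sum G N m t x zs)"
    using assms by (simp add: Etop_Cons Eop_Cons contr_sum_Eop algebra_simps)
  with assms show ?thesis
    by (simp add: Sop_def Fop_Cons_perm_contr)
qed

lemma Sop_eq_Fop:
  assumes t: "t \<in> CNV G N m" and u: "u \<noteq> eta G"
  shows "Sop G N m u t = Fop G N m u t"
proof (rule tens_eqI)
  have traceless: "\<forall>i\<in>idx N. traceless G N m (slice t i)" and tens: "t \<in> tens N (Suc m)"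
    using t by (simp_all add: mem_CNV_iff)
  then show "Sop G N m u t \<in> tens N (Suc m)" "Fop G N m u t \<in> tens N (Suc m)"
    by (simp_all add: Sop_tens Fop_tens)
  fix xs :: "int list"
  assume "length xs = Suc m" "set xs \<subseteq> idx N"
  then obtain x zs where "xs = x # zs" "x \<in> idx N" "length zs = m" "set zs \<subseteq> idx N"
    by (cases xs) auto
  with traceless u show "Sop G N m u t xs = Fop G N m u t xs"
    by (simp add: Sop_Cons)
qed

theorem lemma2p3:
  fixes G :: grp and N m :: nat and u :: complex
  assumes "G = Symp \<Longrightarrow> even N"
    and "m \<ge> 1"
    and "u \<noteq> eta G"
  shows "(\<forall>t\<in>CNV G N m. Sop G N m u t \<in> CNV G N m)
       \<and> (\<forall>t\<in>CNV G N m. Sop G N m u t = Fop G N m u t)"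
proof (intro conjI ballI)
  fix t
  assume t: "t \<in> CNV G N m"
  show "Sop G N m u t = Fop G N m u t"
    using t assms(3) by (rule Sop_eq_Fop)
  then show "Sop G N m u t \<in> CNV G N m"
    using Fop_mem_CNV[OF t assms(1)] by simp
qed

end
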